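(* Let $K$ be an algebraically closed field of characteristic $0$ and let $d,n$ be integers with $1<d<n$ and $\gcd(n,d)=1$. Let $f(x)\in K[x]$ be a monic polynomial of degree $n$ without repeated roots, $\mathcal{C}_{f,d}$ the smooth projective model of $y^d=f(x)$, $m_1:=n+d$, and $a\in K$. The following are equivalent: (a) there exists $P\in\mathcal{C}_{f,d}(K)$ of order $m_1$ with $x(P)=a$; (b) there exist $a_1\in K$ and $v(x)\in K[x]$ such that $a_1\neq a$, $d-1\leq \deg(v)<m_1/d=(n+d)/d$, $v(a_1)\neq 0$, and $f(x)=\dfrac{(x-a)^{m_1}-v(x)^d}{(x-a_1)^d}$. If these equivalent conditions hold, then $m_1=n+d>d^2-d$.
   Context: $\mathcal{C}_{f,d}$ has a unique point at infinity $O$, and $\mathcal{C}_{f,d}\setminus\{O\}$ is identified with the affine curve $y^d=f(x)$, so $x(P)$ denotes the abscissa of $P\neq O$. $\mathcal{C}_{f,d}$ is identified with its image in its Jacobian via $P\mapsto \operatorname{cl}((P)-(O))$ (linear equivalence class); $P$ has order $m$ if $\operatorname{cl}((P)-(O))$ has order $m$ in $J(\mathcal{C}_{f,d})(K)$. *)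

theory Defs
  imports "HOL-Computational_Algebra.Polynomial"
begin

definition alg_closed :: "'a::field itself \<Rightarrow> bool" where
  "alg_closed _ \<longleftrightarrow> (\<forall>p::'a poly. degree p \<ge> 1 \<longrightarrow> (\<exists>x. poly p x = 0))"

text \<open>Affine points of the curve y^d = f(x), i.e. the points of C_{f,d}(K) other than O.\<close>
definition on_curve :: "'a::field poly \<Rightarrow> nat \<Rightarrow> 'a \<times> 'a \<Rightarrow> bool" where
  "on_curve f d Q \<longleftrightarrow> snd Q ^ d = poly f (fst Q)"

text \<open>A regular function on the affine curve, written in the normal form
  h = sum_{i<d} p_i(x) y^i (basis of K[x,y]/(y^d - f) over K[x]).\<close>
definition reg_eval :: "nat \<Rightarrow> (nat \<Rightarrow> 'a::field poly) \<Rightarrow> 'a \<times> 'a \<Rightarrow> 'a" where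
  "reg_eval d p Q = (\<Sum>i<d. poly (p i) (fst Q) * snd Q ^ i)"

text \<open>Pole order at the unique point at infinity O: ord_O(x) = -d, ord_O(y) = -n,
  and since gcd(n,d)=1 the orders of the summands are distinct.\<close>
definition pole_order_O :: "nat \<Rightarrow> nat \<Rightarrow> (nat \<Rightarrow> 'a::field poly) \<Rightarrow> nat" where
  "pole_order_O n d p = Max {d * degree (p i) + n * i | i. i < d \<and> p i \<noteq> 0}"

text \<open>k((P) - (O)) is a principal divisor (k > 0): it is the divisor of a nonzero function
  regular away from O, i.e. of a nonzero h in K[x,y]/(y^d-f) with pole order k at O
  whose only zero on the curve is P.\<close>
definition multiple_principal :: "'a::field poly \<Rightarrow> nat \<Rightarrow> 'a \<times> 'a \<Rightarrow> nat \<Rightarrow> bool" where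
  "multiple_principal f d P k \<longleftrightarrow>
     (\<exists>p::nat \<Rightarrow> 'a poly. (\<exists>i<d. p i \<noteq> 0) \<and>
        pole_order_O (degree f) d p = k \<and>
        {Q. on_curve f d Q \<and> reg_eval d p Q = 0} = {P})"

text \<open>P (an affine point) has order m in the Jacobian: cl((P)-(O)) has order m.\<close>
definition point_order :: "'a::field poly \<Rightarrow> nat \<Rightarrow> 'a \<times> 'a \<Rightarrow> nat \<Rightarrow> bool" where
  "point_order f d P m \<longleftrightarrow> 0 < m \<and> multiple_principal f d P m \<and>
     (\<forall>k. 0 < k \<and> k < m \<longrightarrow> \<not> multiple_principal f d P k)"

end

(*
  A function regular away from O with pole order k < 2n there is v(x) + w(x) y. If P = (a, b)
  has order n + d, the function with divisor (n + d)(P - O) has deg w = 1, say w = c (x - a1),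
  and d deg v < n + d. As it vanishes only at P, its norm v^d - (-w)^d f vanishes only at a,
  so it is a constant multiple of (x - a)^(n+d); rescaling v gives the identity
  (x - a1)^d f = (x - a)^(n+d) - V^d. Squarefreeness of f rules out a1 = a, and applying
  n + d - (x - a) D to the identity shows deg V >= d - 1.
  Conversely, given the identity, V - z (x - a1) y with z^d = -1 has pole order n + d and
  vanishes at a single point P above a. A function of smaller pole order vanishing only at P
  is v + w0 y with w0 constant, and its norm v^d - (-w0)^d f is a power of (x - a) up to a
  constant; with the identity this makes ((x - a1) v)^d and V^d, both of small degree, agree to
  high order at a, so they are equal, which fails at a1.
*)

theory Submission
  imports Defs
begin

lemma alg_closed_poly_root:
  assumes "alg_closed TYPE('a::field)" and "1 \<le> degree (p :: 'a poly)"
  obtains x where "poly p x = 0"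
  using assms unfolding alg_closed_def by blast

lemma alg_closed_nth_root:
  fixes c :: "'a::field"
  assumes "alg_closed TYPE('a)" and "0 < d"
  obtains y where "y ^ d = c"
proof -
  let ?p = "monom (1::'a) d - [:c:]"
  have "coeff ?p d = 1"
    using \<open>0 < d\<close> by (cases d) auto
  then have "1 \<le> degree ?p"
    using \<open>0 < d\<close> le_degree[of ?p d] by simp
  then obtain x where "poly ?p x = 0"
    using alg_closed_poly_root[OF assms(1)] by blast
  then show ?thesis
    using that by (simp add: poly_monom)
qed

lemma alg_closed_nontrivial_root_of_unity:
  assumes "alg_closed TYPE('a::field_char_0)" and "2 \<le> d"
  obtains z :: "'a::field_char_0" where "z ^ d = 1" and "z \<noteq> 1"
proof -
  let ?q = "\<Sum>i<d. monom (1::'a) i"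
  have "coeff ?q 1 = 1"
    using \<open>2 \<le> d\<close> by (simp add: coeff_sum)
  then have "1 \<le> degree ?q"
    using le_degree[of ?q 1] by simp
  then obtain z where "poly ?q z = 0"
    using alg_closed_poly_root[OF assms(1)] by blast
  then have geometric: "(\<Sum>i<d. z ^ i) = 0"
    by (simp add: poly_sum poly_monom)
  then have "z \<noteq> 1"
    using \<open>2 \<le> d\<close> by auto
  moreover have "z ^ d = 1"
    using power_diff_1_eq[of z d] geometric by simp
  ultimately show ?thesis
    using that by blast
qed

lemma alg_closed_other_nth_root:
  fixes b :: "'a::field_char_0"
  assumes "alg_closed TYPE('a)" and "2 \<le> d" and "b ^ d = c" and "c \<noteq> 0"
  obtains b' where "b' ^ d = c" and "b' \<noteq> b"
proof -
  obtain z :: 'a where "z ^ d = 1" and "z \<noteq> 1"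
    using alg_closed_nontrivial_root_of_unity[OF assms(1,2)] by blast
  moreover have "b \<noteq> 0"
    using assms(2-4) by auto
  ultimately show ?thesis
    using that[of "z * b"] assms(3) by (simp add: power_mult_distrib)
qed

lemma poly_eq_smult_linear_power_if_single_root:
  fixes N :: "'a::field poly"
  assumes "alg_closed TYPE('a)" and "\<forall>x. poly N x = 0 \<longrightarrow> x = a"
  shows "N = smult (lead_coeff N) ([:-a, 1:] ^ degree N)"
  using assms(2)
proof (induction "degree N" arbitrary: N)
  case 0
  then have "N = [:lead_coeff N:]"
    using degree_0_id[of N] by simp
  then show ?case
    using "0.hyps" by (metis power_0 smult_one)
next
  case (Suc k)
  obtain r where "poly N r = 0"
    using alg_closed_poly_root[OF assms(1), of N] Suc.hyps(2) by auto
  with Suc.prems obtain M where N: "N = [:-a, 1:] * M"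
    using poly_eq_0_iff_dvd by blast
  then have "M \<noteq> 0"
    using Suc.hyps(2) by auto
  then have "degree N = Suc (degree M)"
    unfolding N by (subst degree_mult_eq) simp_all
  then have "degree M = k"
    using Suc.hyps(2) by simp
  moreover have "\<forall>x. poly M x = 0 \<longrightarrow> x = a"
    using Suc.prems N by simp
  ultimately have "M = smult (lead_coeff M) ([:-a, 1:] ^ k)"
    using Suc.hyps(1) by blast
  then have "N = smult (lead_coeff M) ([:-a, 1:] ^ Suc k)"
    unfolding N by (metis mult_smult_right power_Suc)
  moreover have "lead_coeff N = lead_coeff M"
    unfolding N lead_coeff_mult by simp
  ultimately show ?case
    using Suc.hyps(2) by simp
qed

lemma linear_power_dvd_mult_cancel:
  fixes P S :: "'a::field poly"
  assumes "[:-a, 1:] ^ e dvd P * S" and "poly S a \<noteq> 0"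
  shows "[:-a, 1:] ^ e dvd P"
proof (cases "P = 0")
  case False
  have "S \<noteq> 0" and "order a S = 0"
    using assms(2) by (auto intro: order_0I)
  then have "order a (P * S) = order a P"
    using False by (simp add: order_mult)
  then show ?thesis
    using assms(1) False \<open>S \<noteq> 0\<close> by (simp add: order_divides)
qed simp

lemma rsquarefree_not_linear_power_dvd:
  assumes "rsquarefree f" and "2 \<le> e"
  shows "\<not> [:-a, 1:] ^ e dvd f"
proof -
  have "f \<noteq> 0" and "order a f = 0 \<or> order a f = 1"
    using assms(1) unfolding rsquarefree_def by auto
  then show ?thesis
    using assms(2) by (auto simp: order_divides)
qed

text \<open>With C = \<xi> B, \<xi> = A(a)/B(a), the factor S of A^d - C^d = (A - C) S has
  S(a) = d A(a)^(d-1) \<noteq> 0, so (x - a)^e divides A - C, which has degree < e.\<close>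
lemma power_eq_power_if_linear_power_dvd_diff:
  fixes A B :: "'a::field_char_0 poly"
  assumes dvd: "[:-a, 1:] ^ e dvd A ^ d - B ^ d" and "poly B a \<noteq> 0" and "0 < d"
    and "degree A < e" and "degree B < e"
  shows "A ^ d = B ^ d"
proof -
  have "1 \<le> e"
    using \<open>degree B < e\<close> by simp
  then have "[:-a, 1:] dvd [:-a, 1:] ^ e"
    by simp
  then have "[:-a, 1:] dvd A ^ d - B ^ d"
    using dvd by (rule dvd_trans)
  then have at_a: "poly A a ^ d = poly B a ^ d"
    by (simp add: poly_eq_0_iff_dvd[symmetric])
  then have "poly A a \<noteq> 0"
    using \<open>poly B a \<noteq> 0\<close> \<open>0 < d\<close> by (metis power_not_zero zero_power)
  define C where "C = smult (poly A a / poly B a) B"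
  have C_power: "C ^ d = B ^ d"
    using at_a \<open>poly B a \<noteq> 0\<close> by (simp add: C_def smult_power power_divide)
  have C_at_a: "poly C a = poly A a"
    using \<open>poly B a \<noteq> 0\<close> by (simp add: C_def)
  obtain m where m: "d = Suc m"
    using \<open>0 < d\<close> gr0_implies_Suc by blast
  define S where "S = (\<Sum>i<Suc m. A ^ i * C ^ (m - i))"
  have factor: "A ^ d - C ^ d = (A - C) * S"
    unfolding S_def m by (rule diff_power_eq_sum)
  have "poly S a = (\<Sum>i<Suc m. poly A a ^ i * poly A a ^ (m - i))"
    by (simp add: S_def poly_sum C_at_a)
  also have "\<dots> = (\<Sum>i<Suc m. poly A a ^ m)"
    by (intro sum.cong refl) (simp flip: power_add)
  finally have "poly S a \<noteq> 0"
    using \<open>poly A a \<noteq> 0\<close> by (simp del: of_nat_Suc)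
  then have "[:-a, 1:] ^ e dvd A - C"
    using dvd factor C_power linear_power_dvd_mult_cancel by metis
  moreover have "degree (A - C) < e"
    using assms(4,5) by (intro degree_diff_less) (simp_all add: C_def)
  ultimately have "A = C"
    by (metis degree_linear_power dvd_imp_degree_le leD right_minus_eq)
  then show ?thesis
    using C_power by simp
qed

lemma degree_power_diff_smult:
  fixes v f :: "'a::field poly"
  assumes "\<alpha> \<noteq> 0" and "degree f = n" and "\<not> d dvd n"
  shows "degree (v ^ d - smult \<alpha> f) = max n (d * degree v)"
proof -
  have "degree (v ^ d) = d * degree v"
    by (cases "v = 0"; cases d) (simp_all add: degree_power_eq del: power_Suc)
  moreover have "degree (- smult \<alpha> f) = n"
    using assms(1,2) by simp
  moreover have "d * degree v \<noteq> n"
    using assms(3) by auto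
  ultimately show ?thesis
    unfolding diff_conv_add_uminus
    by (metis degree_add_eq_left degree_add_eq_right linorder_neqE_nat max.absorb1 max.absorb2 less_imp_le)
qed

lemma euler_operator_coeff_degree:
  fixes V :: "'a::field_char_0 poly"
  shows "coeff (smult c ([:-a, 1:] * pderiv V) - smult m V) (degree V)
           = (c * of_nat (degree V) - m) * lead_coeff V"
proof (cases "degree V")
  case 0
  then have "pderiv V = 0"
    by (simp add: pderiv_eq_0_iff)
  then show ?thesis
    using 0 by simp
next
  case (Suc k)
  then have "coeff (pderiv V) (Suc k) = 0"
    by (simp add: coeff_pderiv coeff_eq_0)
  then show ?thesis
    using Suc by (simp add: coeff_pderiv algebra_simps)
qed

lemma euler_operator_degree_le:
  fixes V :: "'a::field_char_0 poly"
  shows "degree (smult c ([:-a, 1:] * pderiv V) - smult m V) \<le> degree V"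
proof -
  have "degree ([:-a, 1:] * pderiv V) \<le> degree V"
  proof (cases "degree V")
    case 0
    then have "pderiv V = 0"
      by (simp add: pderiv_eq_0_iff)
    then show ?thesis
      by simp
  next
    case (Suc k)
    then show ?thesis
      using degree_mult_le[of "[:-a, 1:]" "pderiv V"] by (simp add: degree_pderiv)
  qed
  then show ?thesis
    by (intro degree_diff_le) (simp_all add: degree_smult_le order_trans[OF degree_smult_le])
qed

text \<open>As pderiv X = 1, the operator m - X D annihilates X^m.\<close>
lemma euler_operator_power_diff:
  fixes X V :: "'a::field_char_0 poly"
  assumes "pderiv X = 1" and "0 < m" and "0 < d"
  shows "smult (of_nat m) (X ^ m - V ^ d) - X * pderiv (X ^ m - V ^ d)
           = V ^ (d - 1) * (smult (of_nat d) (X * pderiv V) - smult (of_nat m) V)"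
proof -
  obtain m' d' where m: "m = Suc m'" and d: "d = Suc d'"
    using assms(2,3) by (metis gr0_implies_Suc)
  have deriv: "pderiv (X ^ m - V ^ d) = smult (of_nat m) (X ^ m') - smult (of_nat d) (V ^ d') * pderiv V"
    unfolding m d pderiv_diff pderiv_power_Suc assms(1) by simp
  show ?thesis
    unfolding deriv unfolding m d by (simp add: algebra_simps smult_diff_right)
qed

lemma pole_order_O_ge:
  assumes "i < d" and "p i \<noteq> 0"
  shows "d * degree (p i) + n * i \<le> pole_order_O n d p"
  unfolding pole_order_O_def by (rule Max_ge) (use assms in auto)

lemma pole_order_O_attained:
  assumes "\<exists>i<d. p i \<noteq> 0"
  obtains i where "i < d" and "p i \<noteq> 0" and "pole_order_O n d p = d * degree (p i) + n * i"
proof -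
  have "pole_order_O n d p \<in> {d * degree (p i) + n * i | i. i < d \<and> p i \<noteq> 0}"
    unfolding pole_order_O_def by (rule Max_in) (use assms in auto)
  then show ?thesis
    using that by blast
qed

lemma pole_order_O_eqI:
  assumes "\<And>i. i < d \<Longrightarrow> p i \<noteq> 0 \<Longrightarrow> d * degree (p i) + n * i \<le> k"
    and "j < d" and "p j \<noteq> 0" and "d * degree (p j) + n * j = k"
  shows "pole_order_O n d p = k"
  unfolding pole_order_O_def by (rule Max_eqI) (use assms in auto)

lemma reg_eval_linear_in_y:
  assumes "1 < d" and "\<And>i. 2 \<le> i \<Longrightarrow> i < d \<Longrightarrow> p i = 0"
  shows "reg_eval d p (x, y) = poly (p 0) x + poly (p 1) x * y"
proof -
  have "reg_eval d p (x, y) = (\<Sum>i<2. poly (p i) x * y ^ i)"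
    unfolding reg_eval_def fst_conv snd_conv
    by (rule sum.mono_neutral_right) (use assms in auto)
  then show ?thesis
    by (simp add: numeral_2_eq_2)
qed

lemma reg_eval_if_pole_order_O_less:
  assumes "1 < d" and "pole_order_O n d p < 2 * n"
  shows "reg_eval d p (x, y) = poly (p 0) x + poly (p 1) x * y"
proof (rule reg_eval_linear_in_y)
  fix i assume "2 \<le> i" and "i < d"
  show "p i = 0"
  proof (rule ccontr)
    assume "p i \<noteq> 0"
    then have "n * i \<le> pole_order_O n d p"
      using pole_order_O_ge[OF \<open>i < d\<close>, of p n] by linarith
    moreover have "n * 2 \<le> n * i"
      using \<open>2 \<le> i\<close> by simp
    ultimately show False
      using assms(2) by linarith
  qed
qed fact

lemma pole_order_n_plus_d_shape:
  assumes "1 < d" and "d < n" and "\<not> d dvd n"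
    and "\<exists>i<d. p i \<noteq> 0" and "pole_order_O n d p = n + d"
  shows "degree (p 1) = 1" and "d * degree (p 0) < n + d"
proof -
  obtain i where "i < d" and "p i \<noteq> 0" and attained: "n + d = d * degree (p i) + n * i"
    using pole_order_O_attained[OF assms(4), of n] assms(5) by metis
  have "i \<noteq> 0"
    using attained assms(3) by (metis add_0_right dvd_add_triv_right_iff dvd_triv_left mult_0_right)
  moreover have "i < 2"
  proof (rule ccontr)
    assume "\<not> i < 2"
    then have "n * 2 \<le> n * i"
      by simp
    then show False
      using attained \<open>d < n\<close> by linarith
  qed
  ultimately have "i = 1"
    by simp
  then show "degree (p 1) = 1"
    using attained \<open>1 < d\<close> by simp
  show "d * degree (p 0) < n + d"
  proof (cases "p 0 = 0")
    case False
    then have "d * degree (p 0) \<le> n + d"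
      using pole_order_O_ge[of 0 d p n] assms(1,5) by simp
    moreover have "d * degree (p 0) \<noteq> n + d"
      using assms(3) by (metis dvd_add_triv_right_iff dvd_triv_left)
    ultimately show ?thesis
      by simp
  qed (use \<open>1 < d\<close> in simp)
qed

lemma curve_zero_set_singletonD:
  assumes "{Q. on_curve f d Q \<and> reg_eval d p Q = 0} = {(a, b)}" and "y ^ d = poly f x"
  shows "reg_eval d p (x, y) = 0 \<longleftrightarrow> x = a \<and> y = b"
proof -
  have "(x, y) \<in> {Q. on_curve f d Q \<and> reg_eval d p Q = 0} \<longleftrightarrow> (x, y) \<in> {(a, b)}"
    by (simp only: assms(1))
  then show ?thesis
    using assms(2) by (simp add: on_curve_def)
qed

text \<open>v^d - (-w)^d f is the norm of v + w y: the product of its values at the d points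
  (x, \<zeta> y), \<zeta>^d = 1, above x.\<close>
lemma norm_root_imp_zero_above:
  fixes f v w :: "'a::field poly"
  assumes "alg_closed TYPE('a)" and "0 < d" and "poly (v ^ d - (- w) ^ d * f) x = 0"
  obtains y where "y ^ d = poly f x" and "poly v x + poly w x * y = 0"
proof (cases "poly w x = 0")
  case True
  then have "poly v x = 0"
    using assms(2,3) by (simp add: zero_power)
  moreover obtain y where "y ^ d = poly f x"
    using alg_closed_nth_root[OF assms(1,2)] by blast
  ultimately show ?thesis
    using that True by simp
next
  case False
  define y where "y = - poly v x / poly w x"
  have "poly v x = - poly w x * y"
    using False by (simp add: y_def)
  moreover have "poly v x ^ d = (- poly w x) ^ d * poly f x"
    using assms(3) by simp
  ultimately have "(- poly w x) ^ d * y ^ d = (- poly w x) ^ d * poly f x"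
    by (simp only: power_mult_distrib)
  then have "y ^ d = poly f x"
    using False by simp
  moreover have "poly v x + poly w x * y = 0"
    using False by (simp add: y_def)
  ultimately show ?thesis
    using that by blast
qed

lemma norm_eq_smult_linear_power:
  fixes f v w :: "'a::field poly"
  assumes "alg_closed TYPE('a)" and "0 < d"
    and "\<And>x y. y ^ d = poly f x \<Longrightarrow> poly v x + poly w x * y = 0 \<Longrightarrow> x = a"
  defines "N \<equiv> v ^ d - (- w) ^ d * f"
  shows "N = smult (lead_coeff N) ([:-a, 1:] ^ degree N)"
proof (rule poly_eq_smult_linear_power_if_single_root[OF assms(1)], intro allI impI)
  fix x assume "poly N x = 0"
  then show "x = a"
    using norm_root_imp_zero_above[OF assms(1,2)] assms(3) unfolding N_def by metis
qed

lemma norm_power_dvd_of_constant_y_coefficient: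
  fixes f v :: "'a::field poly"
  assumes ac: "alg_closed TYPE('a)" and "0 < d" and "w0 \<noteq> 0" and "degree f = n" and "\<not> d dvd n"
    and zeros: "\<And>x y. y ^ d = poly f x \<Longrightarrow> poly v x + w0 * y = 0 \<Longrightarrow> x = a"
  shows "[:-a, 1:] ^ max n (d * degree v) dvd v ^ d - smult ((- w0) ^ d) f"
proof -
  define N where "N = v ^ d - smult ((- w0) ^ d) f"
  have "N = v ^ d - (- [:w0:]) ^ d * f"
    by (simp add: N_def poly_const_pow)
  then have "N = smult (lead_coeff N) ([:-a, 1:] ^ degree N)"
    using norm_eq_smult_linear_power[OF ac \<open>0 < d\<close>, of f v "[:w0:]" a] zeros by simp
  moreover have "degree N = max n (d * degree v)"
    unfolding N_def by (rule degree_power_diff_smult) (simp_all add: assms(3-5))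
  ultimately show ?thesis
    unfolding N_def by (metis dvd_smult dvd_refl)
qed

lemma identity_poly_at_base_nonzero:
  fixes f V :: "'a::field poly"
  assumes "rsquarefree f" and "2 \<le> d" and "a1 \<noteq> a"
    and identity: "f * [:-a1, 1:] ^ d = [:-a, 1:] ^ (n + d) - V ^ d"
  shows "poly V a \<noteq> 0"
proof
  assume "poly V a = 0"
  then have "[:-a, 1:] ^ d dvd V ^ d"
    by (simp add: poly_eq_0_iff_dvd dvd_power_same)
  moreover have "[:-a, 1:] ^ d dvd [:-a, 1:] ^ (n + d)"
    by (simp add: le_imp_power_dvd)
  ultimately have "[:-a, 1:] ^ d dvd f * [:-a1, 1:] ^ d"
    unfolding identity by (rule dvd_diff[rotated])
  then have "[:-a, 1:] ^ d dvd f"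
    by (rule linear_power_dvd_mult_cancel) (use \<open>a1 \<noteq> a\<close> in simp)
  then show False
    using rsquarefree_not_linear_power_dvd assms(1,2) by blast
qed

lemma identity_same_base_imp_poly_nonzero:
  fixes f V :: "'a::field poly"
  assumes "rsquarefree f" and "2 \<le> d" and "d \<le> n"
    and identity: "f * [:-a, 1:] ^ d = [:-a, 1:] ^ (n + d) - V ^ d"
  shows "poly f a \<noteq> 0"
proof
  assume "poly f a = 0"
  have "poly V a ^ d = 0"
    using arg_cong[OF identity, of "\<lambda>p. poly p a"] assms(2) by (simp add: zero_power)
  then obtain U where U: "V = [:-a, 1:] * U"
    by (metis poly_eq_0_iff_dvd dvdE power_eq_0_iff)
  have "[:-a, 1:] ^ d * f = [:-a, 1:] ^ d * ([:-a, 1:] ^ n - U ^ d)"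
    using identity unfolding U power_mult_distrib power_add
    by (simp add: algebra_simps)
  then have f: "f = [:-a, 1:] ^ n - U ^ d"
    by simp
  then have "poly U a ^ d = 0"
    using \<open>poly f a = 0\<close> assms(2,3) by (simp add: zero_power)
  then have "[:-a, 1:] ^ d dvd U ^ d"
    by (simp add: poly_eq_0_iff_dvd dvd_power_same)
  moreover have "[:-a, 1:] ^ d dvd [:-a, 1:] ^ n"
    using \<open>d \<le> n\<close> by (rule le_imp_power_dvd)
  ultimately have "[:-a, 1:] ^ d dvd f"
    unfolding f by (rule dvd_diff[rotated])
  then show False
    using rsquarefree_not_linear_power_dvd assms(1,2) by blast
qed

text \<open>Apply n + d - (x - a) D to both sides of the identity: the left side stays divisible
  by (x - a1)^(d-1), the right side becomes V^(d-1) E with E = d (x - a) V' - (n + d) V,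
  a nonzero polynomial of degree at most deg V.\<close>
lemma identity_degree_ge:
  fixes f V :: "'a::field_char_0 poly"
  assumes "0 < d" and identity: "f * [:-a1, 1:] ^ d = [:-a, 1:] ^ (n + d) - V ^ d"
    and "poly V a1 \<noteq> 0" and "d * degree V \<noteq> n + d"
  shows "d - 1 \<le> degree V"
proof -
  define E where "E = smult (of_nat d) ([:-a, 1:] * pderiv V) - smult (of_nat (n + d)) V"
  define g where "g = f * [:-a1, 1:] ^ d"
  have power_dvd: "[:-a1, 1:] ^ (d - 1) dvd [:-a1, 1:] ^ d"
    by (simp add: le_imp_power_dvd)
  have "[:-a1, 1:] ^ (d - 1) dvd g"
    unfolding g_def using power_dvd by (rule dvd_mult)
  moreover have "[:-a1, 1:] ^ (d - 1) dvd pderiv g"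
  proof -
    have "pderiv g = f * smult (of_nat d) ([:-a1, 1:] ^ (d - 1)) + [:-a1, 1:] ^ d * pderiv f"
      unfolding g_def pderiv_mult pderiv_power by (simp add: pderiv_pCons)
    then show ?thesis
      using power_dvd by (simp add: dvd_add dvd_mult dvd_smult)
  qed
  ultimately have "[:-a1, 1:] ^ (d - 1) dvd smult (of_nat (n + d)) g - [:-a, 1:] * pderiv g"
    by (intro dvd_diff dvd_smult dvd_mult)
  also have "smult (of_nat (n + d)) g - [:-a, 1:] * pderiv g = E * V ^ (d - 1)"
    unfolding g_def identity E_def
    by (subst euler_operator_power_diff) (simp_all add: pderiv_pCons \<open>0 < d\<close> mult.commute)
  finally have "[:-a1, 1:] ^ (d - 1) dvd E"
    by (rule linear_power_dvd_mult_cancel) (simp add: \<open>poly V a1 \<noteq> 0\<close>)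
  moreover have "E \<noteq> 0"
  proof -
    have "V \<noteq> 0"
      using \<open>poly V a1 \<noteq> 0\<close> by auto
    moreover have "(of_nat d * of_nat (degree V) - of_nat (n + d) :: 'a) \<noteq> 0"
      using assms(4) by (metis of_nat_mult of_nat_eq_iff right_minus_eq)
    ultimately have "coeff E (degree V) \<noteq> 0"
      unfolding E_def euler_operator_coeff_degree by simp
    then show ?thesis
      by auto
  qed
  ultimately have "d - 1 \<le> degree E"
    using dvd_imp_degree_le by (fastforce simp: degree_linear_power)
  also have "degree E \<le> degree V"
    unfolding E_def by (rule euler_operator_degree_le)
  finally show ?thesis .
qed

lemma identity_of_linear_y_coefficient:
  fixes f v :: "'a::field poly"
  assumes ac: "alg_closed TYPE('a)" and "0 < d" and "c \<noteq> 0"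
    and "lead_coeff f = 1" and "degree f = n" and "d * degree v < n + d"
    and zeros: "\<And>x y. y ^ d = poly f x \<Longrightarrow> poly v x + c * (x - a1) * y = 0 \<Longrightarrow> x = a"
  obtains \<gamma> where "\<gamma> \<noteq> 0" and "f * [:-a1, 1:] ^ d = [:-a, 1:] ^ (n + d) - (smult \<gamma> v) ^ d"
proof -
  define X1 where "X1 = [:-a1, 1:]"
  define \<beta> where "\<beta> = (- c) ^ d"
  define Q where "Q = X1 ^ d * f"
  have "\<beta> \<noteq> 0"
    using \<open>c \<noteq> 0\<close> by (simp add: \<beta>_def)
  have norm: "v ^ d - (- smult c X1) ^ d * f = v ^ d + - smult \<beta> Q"
    by (simp only: smult_power mult_smult_left Q_def \<beta>_def diff_conv_add_uminus smult_minus_left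
        flip: smult_minus_left)
  have "f \<noteq> 0"
    using \<open>lead_coeff f = 1\<close> by auto
  then have "degree (smult \<beta> Q) = n + d"
    using \<open>\<beta> \<noteq> 0\<close> \<open>degree f = n\<close>
    by (simp add: Q_def X1_def degree_mult_eq degree_linear_power)
  moreover have "degree (v ^ d) < n + d"
    using degree_power_le[of v d] \<open>d * degree v < n + d\<close> by (simp add: mult.commute)
  moreover have "lead_coeff (smult \<beta> Q) = \<beta>"
    using \<open>lead_coeff f = 1\<close> by (simp add: Q_def X1_def lead_coeff_mult lead_coeff_power)
  ultimately have degree_norm: "degree (v ^ d + - smult \<beta> Q) = n + d"
    and lead_coeff_norm: "lead_coeff (v ^ d + - smult \<beta> Q) = - \<beta>"
    by (metis degree_add_eq_right degree_minus, metis degree_minus lead_coeff_add_le lead_coeff_minus)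
  have "v ^ d - (- smult c X1) ^ d * f = smult (lead_coeff (v ^ d - (- smult c X1) ^ d * f))
          ([:-a, 1:] ^ degree (v ^ d - (- smult c X1) ^ d * f))"
    by (rule norm_eq_smult_linear_power[OF ac \<open>0 < d\<close>]) (simp add: X1_def zeros algebra_simps)
  then have "v ^ d + - smult \<beta> Q = smult (- \<beta>) ([:-a, 1:] ^ (n + d))"
    unfolding norm lead_coeff_norm unfolding degree_norm .
  obtain \<gamma> where \<gamma>: "\<gamma> ^ d = - inverse \<beta>"
    using alg_closed_nth_root[OF ac \<open>0 < d\<close>] by blast
  then have "\<gamma> \<noteq> 0"
    using \<open>\<beta> \<noteq> 0\<close> \<open>0 < d\<close> by (auto simp: zero_power)
  have "(smult \<gamma> v) ^ d = smult (- inverse \<beta>) (v ^ d)"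
    by (simp add: smult_power \<gamma>)
  also have "v ^ d = smult \<beta> Q - smult \<beta> ([:-a, 1:] ^ (n + d))"
    using \<open>v ^ d + - smult \<beta> Q = _\<close> by (simp add: algebra_simps)
  finally have "(smult \<gamma> v) ^ d = [:-a, 1:] ^ (n + d) - Q"
    using \<open>\<beta> \<noteq> 0\<close> by (simp add: smult_diff_right)
  then show ?thesis
    using that \<open>\<gamma> \<noteq> 0\<close> by (simp add: Q_def X1_def mult.commute)
qed

lemma point_order_n_plus_d_function:
  fixes f :: "'a::field poly"
  assumes "2 \<le> d" and "d < n" and "\<not> d dvd n" and "degree f = n"
    and "point_order f d (a, b) (n + d)"
  obtains c v a1 where "c \<noteq> 0" and "d * degree v < n + d"
    and "\<And>x y. y ^ d = poly f x \<Longrightarrow> poly v x + c * (x - a1) * y = 0 \<longleftrightarrow> x = a \<and> y = b"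
proof -
  obtain p where "\<exists>i<d. p i \<noteq> 0" and pole: "pole_order_O n d p = n + d"
    and zero_set: "{Q. on_curve f d Q \<and> reg_eval d p Q = 0} = {(a, b)}"
    using assms(5) \<open>degree f = n\<close> unfolding point_order_def multiple_principal_def by blast
  have "1 < d"
    using \<open>2 \<le> d\<close> by simp
  have "degree (p 1) = 1" and "d * degree (p 0) < n + d"
    using pole_order_n_plus_d_shape[OF \<open>1 < d\<close> assms(2,3) \<open>\<exists>i<d. p i \<noteq> 0\<close> pole] by simp_all
  then obtain w0 c where "p 1 = [:w0, c:]" and "c \<noteq> 0"
    by (metis degree1_coeffs)
  define a1 where "a1 = - w0 / c"
  have "reg_eval d p (x, y) = poly (p 0) x + c * (x - a1) * y" for x y
    using reg_eval_if_pole_order_O_less[of d n p] pole \<open>1 < d\<close> \<open>d < n\<close> \<open>p 1 = [:w0, c:]\<close> \<open>c \<noteq> 0\<close>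
    by (simp add: a1_def algebra_simps)
  then show ?thesis
    using that[of c "p 0" a1] \<open>c \<noteq> 0\<close> \<open>d * degree (p 0) < n + d\<close> curve_zero_set_singletonD[OF zero_set]
    by simp
qed

lemma identity_of_point_order:
  fixes f :: "'a::field_char_0 poly"
  assumes ac: "alg_closed TYPE('a)" and "2 \<le> d" and "d < n" and "\<not> d dvd n"
    and "degree f = n" and "lead_coeff f = 1" and "rsquarefree f"
    and "on_curve f d (a, b)" and "point_order f d (a, b) (n + d)"
  obtains a1 V where "a1 \<noteq> a" and "d - 1 \<le> degree V" and "d * degree V < n + d"
    and "poly V a1 \<noteq> 0" and "f * [:-a1, 1:] ^ d = [:-a, 1:] ^ (n + d) - V ^ d"
proof (rule point_order_n_plus_d_function[OF \<open>2 \<le> d\<close> \<open>d < n\<close> \<open>\<not> d dvd n\<close> \<open>degree f = n\<close> assms(9)])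
  fix c v a1
  assume "c \<noteq> 0" and "d * degree v < n + d"
    and zeros: "\<And>x y. y ^ d = poly f x \<Longrightarrow> poly v x + c * (x - a1) * y = 0 \<longleftrightarrow> x = a \<and> y = b"
  have "0 < d"
    using \<open>2 \<le> d\<close> by simp
  have zeros_over_a: "x = a" if "y ^ d = poly f x" and "poly v x + c * (x - a1) * y = 0" for x y
    using zeros[OF that(1)] that(2) by simp
  obtain \<gamma> where "\<gamma> \<noteq> 0"
    and identity: "f * [:-a1, 1:] ^ d = [:-a, 1:] ^ (n + d) - (smult \<gamma> v) ^ d"
    by (rule identity_of_linear_y_coefficient[OF ac \<open>0 < d\<close> \<open>c \<noteq> 0\<close> \<open>lead_coeff f = 1\<close>
        \<open>degree f = n\<close> \<open>d * degree v < n + d\<close> zeros_over_a])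
  have "a1 \<noteq> a"
  proof
    assume "a1 = a"
    then have "poly v a = 0"
      using arg_cong[OF identity, of "\<lambda>q. poly q a"] \<open>\<gamma> \<noteq> 0\<close> \<open>2 \<le> d\<close> by (simp add: zero_power)
    moreover have "poly f a \<noteq> 0"
      using identity_same_base_imp_poly_nonzero[OF \<open>rsquarefree f\<close> \<open>2 \<le> d\<close>, of n a]
        identity \<open>a1 = a\<close> \<open>d < n\<close> by simp
    then obtain b' where "b' ^ d = poly f a" and "b' \<noteq> b"
      using alg_closed_other_nth_root[OF ac \<open>2 \<le> d\<close>] \<open>on_curve f d (a, b)\<close>
      unfolding on_curve_def by (metis fst_conv snd_conv)
    ultimately show False
      using zeros[of b' a] \<open>a1 = a\<close> by simp
  qed
  have "poly (smult \<gamma> v) a1 \<noteq> 0"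
    using arg_cong[OF identity, of "\<lambda>q. poly q a1"] \<open>a1 \<noteq> a\<close> \<open>2 \<le> d\<close> by (auto simp: zero_power)
  moreover have "d * degree (smult \<gamma> v) < n + d"
    using \<open>d * degree v < n + d\<close> \<open>\<gamma> \<noteq> 0\<close> by simp
  moreover have "d - 1 \<le> degree (smult \<gamma> v)"
    using identity_degree_ge[OF _ identity] \<open>2 \<le> d\<close> calculation by simp
  ultimately show ?thesis
    using that \<open>a1 \<noteq> a\<close> identity by blast
qed

text \<open>With A = (x - a1) v and B = \<gamma> V, \<gamma>^d = -\<alpha>, the identity gives
  A^d - B^d = (x - a1)^d (v^d - \<alpha> f) + \<alpha> (x - a)^(n+d), which vanishes to order e at a.
  Both A and B have degree < e, so A^d = B^d; but A vanishes at a1 while B does not.\<close>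
lemma identity_excludes_low_order_norm:
  fixes f V v :: "'a::field_char_0 poly"
  assumes ac: "alg_closed TYPE('a)" and "2 \<le> d" and "d < n" and "a1 \<noteq> a"
    and identity: "f * [:-a1, 1:] ^ d = [:-a, 1:] ^ (n + d) - V ^ d"
    and "poly V a \<noteq> 0" and "d * degree V < n + d"
    and "\<alpha> \<noteq> 0" and norm_dvd: "[:-a, 1:] ^ e dvd v ^ d - smult \<alpha> f"
    and "n \<le> e" and "e \<le> n + d" and "d * degree v \<le> e"
  shows False
proof -
  obtain \<gamma> where \<gamma>: "\<gamma> ^ d = - \<alpha>"
    using alg_closed_nth_root[OF ac] \<open>2 \<le> d\<close> by (metis less_le_trans pos2)
  then have "\<gamma> \<noteq> 0"
    using \<open>\<alpha> \<noteq> 0\<close> \<open>2 \<le> d\<close> by (auto simp: zero_power)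
  define Xa where "Xa = [:-a, 1:]"
  define X1 where "X1 = [:-a1, 1:]"
  define A where "A = X1 * v"
  define B where "B = smult \<gamma> V"
  have V_power: "V ^ d = Xa ^ (n + d) - f * X1 ^ d"
    using identity by (simp add: Xa_def X1_def)
  have difference: "A ^ d - B ^ d = X1 ^ d * (v ^ d - smult \<alpha> f) + smult \<alpha> (Xa ^ (n + d))"
    unfolding A_def B_def smult_power \<gamma> V_power power_mult_distrib
    by (simp add: algebra_simps smult_diff_right)
  have contact: "Xa ^ e dvd A ^ d - B ^ d"
    unfolding difference using norm_dvd \<open>e \<le> n + d\<close>
    by (intro dvd_add dvd_mult dvd_smult) (simp_all add: Xa_def le_imp_power_dvd)
  have "poly B a \<noteq> 0"
    using \<open>\<gamma> \<noteq> 0\<close> \<open>poly V a \<noteq> 0\<close> by (simp add: B_def)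
  have "degree A < e"
  proof -
    have "2 * degree v \<le> d * degree v"
      using \<open>2 \<le> d\<close> by simp
    moreover have "degree A \<le> degree v + 1"
      using degree_mult_le[of X1 v] by (simp add: A_def X1_def)
    ultimately show ?thesis
      using \<open>d * degree v \<le> e\<close> \<open>n \<le> e\<close> \<open>2 \<le> d\<close> \<open>d < n\<close> by linarith
  qed
  have "degree B < e"
  proof -
    have "2 * degree V \<le> d * degree V"
      using \<open>2 \<le> d\<close> by simp
    then have "degree V < e"
      using \<open>d * degree V < n + d\<close> \<open>d < n\<close> \<open>n \<le> e\<close> by linarith
    then show ?thesis
      using \<open>\<gamma> \<noteq> 0\<close> by (simp add: B_def)
  qed
  have "A ^ d = B ^ d"
    using contact \<open>poly B a \<noteq> 0\<close> \<open>2 \<le> d\<close> \<open>degree A < e\<close> \<open>degree B < e\<close>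
    unfolding Xa_def by (intro power_eq_power_if_linear_power_dvd_diff) auto
  then have "poly (X1 ^ d * (v ^ d - smult \<alpha> f) + smult \<alpha> (Xa ^ (n + d))) a1 = 0"
    unfolding difference[symmetric] by simp
  then show False
    using \<open>\<alpha> \<noteq> 0\<close> \<open>a1 \<noteq> a\<close> \<open>2 \<le> d\<close> by (simp add: Xa_def X1_def zero_power)
qed

text \<open>On the curve, V - z (x - a1) y = 0 with z^d = -1 forces V^d = -(x - a1)^d f,
  i.e. (x - a)^(n+d) = 0 by the identity.\<close>
lemma identity_twisted_function_zero_iff:
  fixes f V :: "'a::field poly"
  assumes "a1 \<noteq> a" and "0 < d" and "z ^ d = -1"
    and identity: "f * [:-a1, 1:] ^ d = [:-a, 1:] ^ (n + d) - V ^ d"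
    and "y ^ d = poly f x"
  shows "poly V x - z * (x - a1) * y = 0 \<longleftrightarrow> x = a \<and> y = poly V a / (z * (a - a1))"
proof
  have "z \<noteq> 0"
    using assms(2,3) by (auto simp: zero_power)
  assume zero: "poly V x - z * (x - a1) * y = 0"
  then have "poly V x ^ d = - ((x - a1) ^ d * poly f x)"
    using assms(3,5) by (simp add: power_mult_distrib)
  then have "(x - a) ^ (n + d) = 0"
    using arg_cong[OF identity, of "\<lambda>q. poly q x"] by (simp add: algebra_simps)
  then have "x = a"
    by simp
  moreover from this have "y = poly V a / (z * (a - a1))"
    using zero \<open>z \<noteq> 0\<close> \<open>a1 \<noteq> a\<close> by (simp add: field_simps)
  ultimately show "x = a \<and> y = poly V a / (z * (a - a1))" ..
next
  assume "x = a \<and> y = poly V a / (z * (a - a1))"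
  then show "poly V x - z * (x - a1) * y = 0"
    using assms(2,3) \<open>a1 \<noteq> a\<close> by (auto simp: zero_power)
qed

lemma identity_point_multiple_principal:
  fixes f V :: "'a::field poly"
  assumes ac: "alg_closed TYPE('a)" and "2 \<le> d" and "a1 \<noteq> a"
    and "degree f = n" and "d * degree V < n + d"
    and identity: "f * [:-a1, 1:] ^ d = [:-a, 1:] ^ (n + d) - V ^ d"
  obtains b where "on_curve f d (a, b)" and "multiple_principal f d (a, b) (n + d)"
proof -
  have "0 < d"
    using \<open>2 \<le> d\<close> by simp
  obtain z :: 'a where z: "z ^ d = -1"
    using alg_closed_nth_root[OF ac \<open>0 < d\<close>] by blast
  then have "z \<noteq> 0"
    using \<open>0 < d\<close> by (auto simp: zero_power)
  define b where "b = poly V a / (z * (a - a1))"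
  have "poly V a ^ d = - ((a - a1) ^ d * b ^ d)"
    using \<open>z \<noteq> 0\<close> \<open>a1 \<noteq> a\<close> z by (simp add: b_def power_divide power_mult_distrib)
  then have "poly f a = b ^ d"
    using arg_cong[OF identity, of "\<lambda>q. poly q a"] \<open>0 < d\<close> \<open>a1 \<noteq> a\<close>
    by (simp add: zero_power mult.commute)
  then have "on_curve f d (a, b)"
    by (simp add: on_curve_def)
  define p where "p = (\<lambda>i::nat. if i = 0 then V else if i = 1 then smult (- z) [:-a1, 1:] else 0)"
  have "p 1 \<noteq> 0" and "degree (p 1) = 1"
    using \<open>z \<noteq> 0\<close> by (simp_all add: p_def)
  have "pole_order_O n d p = n + d"
  proof (rule pole_order_O_eqI)
    fix i assume "i < d" and "p i \<noteq> 0"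
    then have "i = 0 \<or> i = 1"
      by (auto simp: p_def split: if_splits)
    then show "d * degree (p i) + n * i \<le> n + d"
      using \<open>d * degree V < n + d\<close> \<open>degree (p 1) = 1\<close> by (auto simp: p_def)
  qed (use \<open>2 \<le> d\<close> \<open>p 1 \<noteq> 0\<close> \<open>degree (p 1) = 1\<close> in auto)
  moreover have "reg_eval d p (x, y) = poly V x - z * (x - a1) * y" for x y
    using reg_eval_linear_in_y[of d p x y] \<open>2 \<le> d\<close> by (simp add: p_def algebra_simps)
  then have "{Q. on_curve f d Q \<and> reg_eval d p Q = 0} = {(a, b)}"
    using identity_twisted_function_zero_iff[OF \<open>a1 \<noteq> a\<close> \<open>0 < d\<close> z identity, folded b_def]
      \<open>on_curve f d (a, b)\<close> unfolding on_curve_def by auto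
  moreover have "\<exists>i<d. p i \<noteq> 0"
    using \<open>2 \<le> d\<close> \<open>p 1 \<noteq> 0\<close> by (intro exI[of _ 1]) simp
  ultimately show ?thesis
    using that \<open>on_curve f d (a, b)\<close> \<open>degree f = n\<close> unfolding multiple_principal_def by blast
qed

lemma identity_point_not_multiple_principal_below:
  fixes f V :: "'a::field_char_0 poly"
  assumes ac: "alg_closed TYPE('a)" and "2 \<le> d" and "d < n" and "\<not> d dvd n"
    and "degree f = n" and "a1 \<noteq> a" and "d * degree V < n + d" and "poly V a \<noteq> 0"
    and identity: "f * [:-a1, 1:] ^ d = [:-a, 1:] ^ (n + d) - V ^ d"
    and "on_curve f d (a, b)" and "k < n + d"
  shows "\<not> multiple_principal f d (a, b) k"
proof
  assume "multiple_principal f d (a, b) k"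
  then obtain p where pole: "pole_order_O n d p = k"
    and zero_set: "{Q. on_curve f d Q \<and> reg_eval d p Q = 0} = {(a, b)}"
    using \<open>degree f = n\<close> unfolding multiple_principal_def by blast
  define v w where "v = p 0" and "w = p 1"
  have "reg_eval d p (x, y) = poly v x + poly w x * y" for x y
    using reg_eval_if_pole_order_O_less[of d n p] pole \<open>2 \<le> d\<close> \<open>d < n\<close> \<open>k < n + d\<close>
    by (simp add: v_def w_def)
  then have zeros: "poly v x + poly w x * y = 0 \<longleftrightarrow> x = a \<and> y = b" if "y ^ d = poly f x" for x y
    using curve_zero_set_singletonD[OF zero_set that] by simp
  have "b ^ d = poly f a"
    using \<open>on_curve f d (a, b)\<close> by (simp add: on_curve_def)
  have "poly f a \<noteq> 0"
    using arg_cong[OF identity, of "\<lambda>q. poly q a"] \<open>poly V a \<noteq> 0\<close> \<open>2 \<le> d\<close> by (auto simp: zero_power)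
  show False
  proof (cases "w = 0")
    case True
    obtain b' where "b' ^ d = poly f a" and "b' \<noteq> b"
      using alg_closed_other_nth_root[OF ac \<open>2 \<le> d\<close> \<open>b ^ d = poly f a\<close> \<open>poly f a \<noteq> 0\<close>] .
    then show False
      using zeros[OF \<open>b ^ d = poly f a\<close>] zeros[of b' a] True by simp
  next
    case False
    then have "n + d * degree w \<le> k"
      using pole_order_O_ge[of 1 d p n] pole \<open>2 \<le> d\<close> by (simp add: w_def)
    then have "degree w = 0"
      using \<open>k < n + d\<close> by (cases "degree w") auto
    then obtain w0 where "w = [:w0:]" and "w0 \<noteq> 0"
      using False by (metis degree_0_id pCons_eq_0_iff)
    have "x = a" if "y ^ d = poly f x" and "poly v x + w0 * y = 0" for x y
      using zeros[OF that(1)] that(2) \<open>w = [:w0:]\<close> by simp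
    then have "[:-a, 1:] ^ max n (d * degree v) dvd v ^ d - smult ((- w0) ^ d) f"
      using \<open>2 \<le> d\<close> \<open>w0 \<noteq> 0\<close> \<open>degree f = n\<close> \<open>\<not> d dvd n\<close>
      by (intro norm_power_dvd_of_constant_y_coefficient[OF ac]) auto
    moreover have "d * degree v \<le> k"
      using pole_order_O_ge[of 0 d p n] pole \<open>2 \<le> d\<close> by (cases "v = 0") (simp_all add: v_def)
    ultimately show False
      using identity_excludes_low_order_norm[OF ac \<open>2 \<le> d\<close> \<open>d < n\<close> \<open>a1 \<noteq> a\<close> identity
          \<open>poly V a \<noteq> 0\<close> \<open>d * degree V < n + d\<close>, where \<alpha> = "(- w0) ^ d" and e = "max n (d * degree v)" and v = v]
        \<open>w0 \<noteq> 0\<close> \<open>n + d * degree w \<le> k\<close> \<open>k < n + d\<close> by simp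
  qed
qed

lemma point_order_of_identity:
  fixes f V :: "'a::field_char_0 poly"
  assumes ac: "alg_closed TYPE('a)" and "2 \<le> d" and "d < n" and "\<not> d dvd n"
    and "degree f = n" and "rsquarefree f" and "a1 \<noteq> a" and "d * degree V < n + d"
    and identity: "f * [:-a1, 1:] ^ d = [:-a, 1:] ^ (n + d) - V ^ d"
  obtains b where "on_curve f d (a, b)" and "point_order f d (a, b) (n + d)"
proof -
  have "poly V a \<noteq> 0"
    using identity_poly_at_base_nonzero[OF \<open>rsquarefree f\<close> \<open>2 \<le> d\<close> \<open>a1 \<noteq> a\<close> identity] .
  then obtain b where "on_curve f d (a, b)" and "multiple_principal f d (a, b) (n + d)"
    using identity_point_multiple_principal[OF ac \<open>2 \<le> d\<close> \<open>a1 \<noteq> a\<close> \<open>degree f = n\<close>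
        \<open>d * degree V < n + d\<close> identity] by blast
  moreover have "\<not> multiple_principal f d (a, b) k" if "k < n + d" for k
    using identity_point_not_multiple_principal_below[OF ac \<open>2 \<le> d\<close> \<open>d < n\<close> \<open>\<not> d dvd n\<close>
        \<open>degree f = n\<close> \<open>a1 \<noteq> a\<close> \<open>d * degree V < n + d\<close> \<open>poly V a \<noteq> 0\<close> identity]
      calculation(1) that .
  ultimately show ?thesis
    using that \<open>d < n\<close> unfolding point_order_def by blast
qed

theorem theorem6p1:
  fixes f :: "'a::field_char_0 poly" and d n :: nat and a :: 'a
  assumes "alg_closed TYPE('a)"
    and "1 < d" and "d < n" and "coprime n d"
    and "lead_coeff f = 1" and "degree f = n" and "rsquarefree f"
  shows "((\<exists>b. on_curve f d (a, b) \<and> point_order f d (a, b) (n + d)) \<longleftrightarrow>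
           (\<exists>a1 v. a1 \<noteq> a \<and> d - 1 \<le> degree v \<and>
              real (degree v) < real (n + d) / real d \<and> poly v a1 \<noteq> 0 \<and>
              f * [:-a1, 1:] ^ d = [:-a, 1:] ^ (n + d) - v ^ d))
         \<and> ((\<exists>b. on_curve f d (a, b) \<and> point_order f d (a, b) (n + d)) \<longrightarrow> n + d > d^2 - d)"
proof -
  have "2 \<le> d"
    using \<open>1 < d\<close> by simp
  have "\<not> d dvd n"
    using \<open>coprime n d\<close> \<open>1 < d\<close> by (metis coprime_common_divisor_nat dvd_refl less_irrefl)
  have degree_bound_iff: "real k < real (n + d) / real d \<longleftrightarrow> d * k < n + d" for k
    using \<open>1 < d\<close> by (simp add: pos_less_divide_eq mult.commute flip: of_nat_mult of_nat_add)
  have "d ^ 2 - d < n + d" if "d - 1 \<le> k" and "d * k < n + d" for k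
    using mult_le_mono2[OF that(1), of d] that(2) by (simp add: power2_eq_square diff_mult_distrib2)
  then show ?thesis
    using identity_of_point_order[OF assms(1) \<open>2 \<le> d\<close> \<open>d < n\<close> \<open>\<not> d dvd n\<close> assms(6,5,7)]
      point_order_of_identity[OF assms(1) \<open>2 \<le> d\<close> \<open>d < n\<close> \<open>\<not> d dvd n\<close> assms(6,7)]
      degree_bound_iff by metis
qed

end
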